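(* Let $S=S(k_0,\dots,k_{m-1},k_m)$ with $k_0\geq0$ and $k_i\geq1$ for $1\leq i\leq m$. Then: (i) if $S\neq\varepsilon$, $P_C(S)=S(k_0,\dots,k_{m-1},k_m-1)$ and $P_D(S)=S(k_0,\dots,k_{m-2},k_{m-1}-1)$; (ii) $N(S)=2^{|S|+1}+\sum_{i=1}^{m}(-1)^i\,2^{k_i+k_{i+1}+\cdots+k_m}-c$, where $c=2$ if $m$ is even and $c=1$ if $m$ is odd; that is, $N(S)=2^{k_0+\cdots+k_m+1}-2^{k_1+\cdots+k_m}+2^{k_2+\cdots+k_m}-\cdots+2^{k_m}-2$ if $m$ is even and $N(S)=2^{k_0+\cdots+k_m+1}-2^{k_1+\cdots+k_m}+2^{k_2+\cdots+k_m}-\cdots-2^{k_m}-1$ if $m$ is odd; (iii) $r(S)=2\left(1-2^{-k_0}+2^{-k_0-k_1}-\cdots+(-1)^m2^{-k_0-k_1-\cdots-k_{m-1}}+(-1)^{m+1}2^{-|S|-1}\right)$, and equivalently $r(S)=2\sum_{i=0}^{m+1}(-1)^i2^{-e_i}+(-1)^{m+2}2^{-|S|}$ where $e_i=\sum_{j=0}^{i-1}k_j$ (so $e_0=0$).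
   Context: $\{L,R\}^*$ is the free monoid on $L,R$ (strings), with empty string $\varepsilon$; $|S|$ is the number of symbols of $S$. For $k_0\geq 0$, $k_1,\dots,k_m\geq 1$, $S(k_0,\dots,k_m)$ is the string $R^{k_0}L^{k_1}R^{k_2}\cdots$ with $m+1$ alternating blocks (last block $R^{k_m}$ if $m$ even, $L^{k_m}$ if $m$ odd); every string has exactly one such representation, $\varepsilon=S(0)$; note $|S|=k_0+\cdots+k_m$. Blocks with exponent $0$ are omitted; by convention $S(-1)$ denotes the generalized string $R^{-1}$, and when $m=0$ the expression $S(k_0,\dots,k_{m-2},k_{m-1}-1)$ denotes $L^{-1}$. Parents: $P_L(S)=SR^{-1}$ and $P_R(S)=SL^{-1}$, evaluated recursively with the rules $LL^{-1}=\varepsilon$, $RR^{-1}=\varepsilon$, $LR^{-1}=R^{-1}$, $RL^{-1}=L^{-1}$ (and $\varepsilon R^{-1}=R^{-1}$, $\varepsilon L^{-1}=L^{-1}$). Position: $N\colon\{L,R\}^*\to\mathbb{N}$ is defined by $N(\varepsilon)=0$, $N(SL)=2N(S)+1$, $N(SR)=2N(S)+2$. For $S\neq\varepsilon$ with $n=N(S)$, the close parent is $P_C(S)=P_L(S)$ if $n$ is even and $P_R(S)$ if $n$ is odd; the distant parent is $P_D(S)=P_L(S)$ if $n$ is odd and $P_R(S)$ if $n$ is even. The function $r$ is defined by $r(\varepsilon)=1$, $r(SL)=r(S)-2^{-|SL|}$, $r(SR)=r(S)+2^{-|SR|}$. *)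

theory Defs
  imports Complex_Main
begin

datatype sym = L | R

type_synonym str = "sym list"

text \<open>Generalized strings: ordinary strings, or the formal inverse of a single symbol
  (Inv R stands for R^{-1}, Inv L for L^{-1}).\<close>
datatype gstr = Str "sym list" | Inv sym

definition Sblk :: "nat list \<Rightarrow> str" where
  "Sblk ks = concat (map (\<lambda>i. replicate (ks ! i) (if even i then R else L)) [0..<length ks])"

text \<open>Generalized S with integer exponents, using the paper's conventions:
  S(-1) = R^{-1}, and the empty argument list (arising from S(k_0,...,k_{m-2},k_{m-1}-1)
  when m = 0) denotes L^{-1}.\<close>
definition Sgen :: "int list \<Rightarrow> gstr" where
  "Sgen ks = (if ks = [] then Inv L else if ks = [-1] then Inv R else Str (Sblk (map nat ks)))"

definition declast :: "int list \<Rightarrow> int list" where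
  "declast ks = butlast ks @ [last ks - 1]"

text \<open>Evaluate S x^{-1} with rules LL^{-1}=e, RR^{-1}=e, LR^{-1}=R^{-1}, RL^{-1}=L^{-1},
  e x^{-1} = x^{-1}. The list argument is the reversed string.\<close>
fun cancel_rev :: "sym \<Rightarrow> sym list \<Rightarrow> gstr" where
  "cancel_rev x [] = Inv x"
| "cancel_rev x (y # ys) = (if y = x then Str (rev ys) else cancel_rev x ys)"

definition PL :: "str \<Rightarrow> gstr" where "PL S = cancel_rev R (rev S)"
definition PR :: "str \<Rightarrow> gstr" where "PR S = cancel_rev L (rev S)"

definition N :: "str \<Rightarrow> nat" where
  "N S = foldl (\<lambda>n x. 2 * n + (case x of L \<Rightarrow> 1 | R \<Rightarrow> 2)) 0 S"

definition PC :: "str \<Rightarrow> gstr" where "PC S = (if even (N S) then PL S else PR S)"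
definition PD :: "str \<Rightarrow> gstr" where "PD S = (if odd (N S) then PL S else PR S)"

text \<open>r(e)=1, r(SL)=r(S)-2^{-|SL|}, r(SR)=r(S)+2^{-|SR|}; argument is the reversed string.\<close>
fun r_rev :: "sym list \<Rightarrow> real" where
  "r_rev [] = 1"
| "r_rev (x # ys) = r_rev ys + (case x of L \<Rightarrow> -1 | R \<Rightarrow> 1) * (1/2) ^ (length ys + 1)"

definition r :: "str \<Rightarrow> real" where "r S = r_rev (rev S)"

end

theory Submission imports Defs begin

text \<open>Everything follows by appending one block at a time. Appending \<open>k\<close> copies of a symbol
  multiplies \<open>N\<close> by \<open>2^k\<close> and adds \<open>(2^k - 1)\<close> times its digit, and shifts \<open>r\<close> by
  \<open>\<pm>(2^-|S| - 2^-(|S|+k))\<close>; unrolling gives the closed forms (ii) and (iii). For (i), the last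
  symbol of \<open>S\<close> is \<open>R\<close> exactly when \<open>N(S)\<close> is even, so the close parent cancels the last symbol,
  while the distant parent skips the last block and cancels the last symbol of the block before.\<close>

definition block_sym :: "nat \<Rightarrow> sym" where
  "block_sym i = (if even i then R else L)"

lemma block_sym_neq_Suc: "block_sym i \<noteq> block_sym (Suc i)"
  by (simp add: block_sym_def)

lemma Sblk_Nil [simp]: "Sblk [] = []"
  by (simp add: Sblk_def)

lemma Sblk_snoc: "Sblk (ks @ [k]) = Sblk ks @ replicate k (block_sym (length ks))"
  unfolding Sblk_def block_sym_def by (auto simp: nth_append intro!: arg_cong[where f = concat])

lemma Sblk_singleton [simp]: "Sblk [k] = replicate k R"
  using Sblk_snoc[of "[]" k] by (simp add: block_sym_def)

lemma length_Sblk: "length (Sblk ks) = sum_list ks"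
  by (induction ks rule: rev_induct) (auto simp: Sblk_snoc)

lemma N_snoc: "N (A @ [x]) = 2 * N A + (case x of L \<Rightarrow> 1 | R \<Rightarrow> 2)"
  by (simp add: N_def)

lemma N_append_replicate:
  "int (N (A @ replicate k x)) = 2 ^ k * int (N A) + (2 ^ k - 1) * (case x of L \<Rightarrow> 1 | R \<Rightarrow> 2)"
proof (induction k)
  case (Suc k)
  have "A @ replicate (Suc k) x = (A @ replicate k x) @ [x]"
    by (simp add: replicate_append_same[symmetric])
  then show ?case
    using Suc by (cases x) (simp_all only: N_snoc, simp_all add: algebra_simps)
qed simp

lemma N_Sblk:
  "int (N (Sblk (xs @ [k]))) = 2 ^ (sum_list (xs @ [k]) + 1)
     + (\<Sum>i=1..length xs. (-1) ^ i * 2 ^ sum_list (drop i (xs @ [k])))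
     - (if even (length xs) then 2 else 1)"
proof (induction xs arbitrary: k rule: rev_induct)
  case Nil
  then show ?case
    using N_append_replicate[of "[]" k R] by (simp add: N_def)
next
  case (snoc a xs)
  let ?ys = "xs @ [a]"
  let ?alt = "\<Sum>i=1..length xs. (-1) ^ i * (2::int) ^ sum_list (drop i ?ys)"
  have alt: "(\<Sum>i=1..length ?ys. (-1) ^ i * (2::int) ^ sum_list (drop i (?ys @ [k])))
      = 2 ^ k * ?alt + (-1) ^ length ?ys * 2 ^ k"
    by (simp add: sum_distrib_left power_add algebra_simps)
  have N_step: "int (N (Sblk (?ys @ [k]))) = 2 ^ k * int (N (Sblk ?ys))
      + (2 ^ k - 1) * (if even (length xs) then 1 else 2)"
    unfolding Sblk_snoc[of ?ys] N_append_replicate by (simp add: block_sym_def)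
  have "(2::int) ^ (sum_list (?ys @ [k]) + 1) = 2 ^ k * 2 ^ (sum_list ?ys + 1)"
    by (simp add: power_add)
  then show ?case
    unfolding alt N_step snoc by (simp add: algebra_simps)
qed

lemma r_snoc: "r (A @ [x]) = r A + (case x of L \<Rightarrow> -1 | R \<Rightarrow> 1) * (1/2) ^ (length A + 1)"
  by (simp add: r_def)

lemma r_append_replicate:
  "r (A @ replicate k x)
     = r A + (case x of L \<Rightarrow> -1 | R \<Rightarrow> 1) * ((1/2) ^ length A - (1/2) ^ (length A + k))"
proof (induction k)
  case (Suc k)
  have "A @ replicate (Suc k) x = (A @ replicate k x) @ [x]"
    by (simp add: replicate_append_same[symmetric])
  then show ?case
    using Suc by (simp only: r_snoc) (simp add: algebra_simps)
qed simp

lemma r_Sblk: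
  "r (Sblk ks) = 2 * (\<Sum>i<length ks. (-1) ^ i * (1/2) ^ sum_list (take i ks))
     + (-1) ^ length ks * (1/2) ^ sum_list ks"
proof (induction ks rule: rev_induct)
  case Nil
  then show ?case by (simp add: r_def)
next
  case (snoc k ks)
  have "(\<Sum>i<length ks. (-1) ^ i * (1/2::real) ^ sum_list (take i (ks @ [k])))
      = (\<Sum>i<length ks. (-1) ^ i * (1/2) ^ sum_list (take i ks))"
    by (rule sum.cong) simp_all
  moreover have "(-1::real) ^ length ks = (case block_sym (length ks) of L \<Rightarrow> -1 | R \<Rightarrow> 1)"
    by (simp add: block_sym_def)
  ultimately show ?case
    using snoc by (simp add: Sblk_snoc r_append_replicate length_Sblk power_add algebra_simps)
qed

lemma PC_snoc: "PC (A @ [x]) = Str A"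
  by (cases x) (simp_all add: PC_def PL_def PR_def N_snoc)

lemma PD_snoc: "y \<noteq> x \<Longrightarrow> PD (A @ [x]) = cancel_rev y (rev A)"
  by (cases x; cases y) (simp_all add: PD_def PL_def PR_def N_snoc)

lemma cancel_rev_replicate_other: "y \<noteq> x \<Longrightarrow> cancel_rev x (replicate k y @ zs) = cancel_rev x zs"
  by (induction k) auto

lemma Sgen_declast_snoc:
  "Sgen (declast (map int (xs @ [k]))) = (if xs = [] \<and> k = 0 then Inv R else Str (Sblk (xs @ [k - 1])))"
proof -
  have "map nat (map int xs @ [int k - 1]) = xs @ [k - 1]"
    by (simp add: comp_def)
  moreover have "map int xs @ [int k - 1] = [-1] \<longleftrightarrow> xs = [] \<and> k = 0"
    by (cases xs) auto
  ultimately show ?thesis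
    by (simp add: Sgen_def declast_def)
qed

lemma Sblk_snoc_pos:
  "k \<ge> 1 \<Longrightarrow> Sblk (xs @ [k]) = Sblk (xs @ [k - 1]) @ [block_sym (length xs)]"
  by (cases k) (simp_all add: Sblk_snoc replicate_append_same)

lemma cancel_rev_last_block:
  assumes "a \<ge> 1 \<or> ys = []"
  shows "cancel_rev (block_sym (length ys)) (rev (Sblk (ys @ [a]))) = Sgen (declast (map int (ys @ [a])))"
proof (cases "a = 0")
  case True
  then show ?thesis
    unfolding Sgen_declast_snoc using assms by (simp add: Sblk_def block_sym_def)
next
  case False
  then show ?thesis
    unfolding Sgen_declast_snoc by (simp add: Sblk_snoc_pos)
qed

lemma PC_PD_Sblk:
  assumes "k \<ge> 1" and "length xs \<ge> 2 \<Longrightarrow> last xs \<ge> 1"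
  shows "PC (Sblk (xs @ [k])) = Sgen (declast (map int (xs @ [k])))"
    and "PD (Sblk (xs @ [k])) = Sgen (if xs = [] then [] else declast (map int xs))"
proof -
  let ?x = "block_sym (length xs)"
  have S: "Sblk (xs @ [k]) = Sblk (xs @ [k - 1]) @ [?x]"
    using assms(1) by (rule Sblk_snoc_pos)
  show "PC (Sblk (xs @ [k])) = Sgen (declast (map int (xs @ [k])))"
    unfolding S PC_snoc Sgen_declast_snoc using assms(1) by simp
  show "PD (Sblk (xs @ [k])) = Sgen (if xs = [] then [] else declast (map int xs))"
  proof (cases xs rule: rev_exhaust)
    case Nil
    have "block_sym (length xs) = R"
      by (simp add: Nil block_sym_def)
    then show ?thesis
      unfolding S using PD_snoc[of L R] cancel_rev_replicate_other[of R L "k - 1" "[]"]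
      by (simp add: Nil Sgen_def)
  next
    case (snoc ys a)
    let ?y = "block_sym (length ys)"
    have "?y \<noteq> ?x"
      using block_sym_neq_Suc by (simp add: snoc)
    have "PD (Sblk (xs @ [k])) = cancel_rev ?y (rev (Sblk (xs @ [k - 1])))"
      unfolding S using \<open>?y \<noteq> ?x\<close> by (rule PD_snoc)
    also have "\<dots> = cancel_rev ?y (rev (Sblk xs))"
      using \<open>?y \<noteq> ?x\<close> by (simp add: Sblk_snoc cancel_rev_replicate_other)
    also have "\<dots> = Sgen (declast (map int xs))"
      unfolding snoc by (rule cancel_rev_last_block) (use assms(2) snoc in \<open>auto simp: Suc_le_eq\<close>)
    finally show ?thesis
      by (simp add: snoc)
  qed
qed

theorem theorem2:
  fixes ks :: "nat list" and m :: nat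
  assumes len: "length ks = m + 1"
    and pos: "\<forall>i\<in>{1..m}. ks ! i \<ge> 1"
  shows "(Sblk ks \<noteq> [] \<longrightarrow>
            PC (Sblk ks) = Sgen (declast (map int ks)) \<and>
            PD (Sblk ks) = Sgen (if m = 0 then [] else declast (butlast (map int ks))))
       \<and> int (N (Sblk ks)) =
            2 ^ (length (Sblk ks) + 1)
            + (\<Sum>i=1..m. (-1) ^ i * 2 ^ (sum_list (drop i ks)))
            - (if even m then 2 else 1)
       \<and> r (Sblk ks) =
            2 * ((\<Sum>i=0..m. (-1) ^ i * (1/2) ^ (sum_list (take i ks)))
                 + (-1) ^ (m + 1) * (1/2) ^ (length (Sblk ks) + 1))
       \<and> r (Sblk ks) =
            2 * (\<Sum>i=0..m+1. (-1) ^ i * (1/2) ^ (sum_list (take i ks)))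
            + (-1) ^ (m + 2) * (1/2) ^ (length (Sblk ks))"
proof -
  obtain xs k where ks: "ks = xs @ [k]" and m: "m = length xs"
    using len by (cases ks rule: rev_exhaust) auto
  have parents: "PC (Sblk ks) = Sgen (declast (map int ks)) \<and>
      PD (Sblk ks) = Sgen (if m = 0 then [] else declast (butlast (map int ks)))"
    if "Sblk ks \<noteq> []"
  proof -
    have "k \<ge> 1"
      using that pos[rule_format, of m] by (cases xs) (auto simp: ks m)
    moreover have "last xs \<ge> 1" if "length xs \<ge> 2"
    proof -
      have "last xs = ks ! (m - 1)"
        using that by (cases xs rule: rev_exhaust) (auto simp: ks m nth_append)
      then show ?thesis
        using pos that m by auto
    qed
    ultimately show ?thesis
      using PC_PD_Sblk[of k xs] by (simp add: ks m)
  qed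
  have r: "r (Sblk ks) = 2 * (\<Sum>i=0..m. (-1) ^ i * (1/2) ^ sum_list (take i ks))
      + (-1) ^ (m + 1) * (1/2) ^ length (Sblk ks)"
    using r_Sblk[of ks] by (simp add: len length_Sblk atLeast0AtMost lessThan_Suc_atMost)
  show ?thesis
    using parents N_Sblk[of xs k] r
    by (simp add: ks m length_Sblk algebra_simps)
qed

end
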